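(* Let $A$ (held by Alice) and $B$ (held by Bob) be strings over an alphabet $\Sigma$ known to both parties, and let $\epsilon>0$ be any constant. The \textsc{Lcp} problem, computing $\ell=\mathrm{LCP}(A,B)$, has a public-coin randomized protocol with either (1) $O(1)$ rounds and $O(|A|^\epsilon)$ communication, or (2) $O(\lg\lg\ell)$ rounds and $O(\ell^\epsilon)$ communication.
   Context: $\mathrm{LCP}(A,B)$ is the largest $\ell\ge0$ with $A[1..\ell]=B[1..\ell]$. In the public-coin randomized model the parties share an infinite string of independent unbiased random bits, and the output must be correct with probability at least a fixed constant greater than $1/2$. A round is one message; communication is the total number of bits sent. *)

theory Defs
  imports "HOL-Probability.Probability" "HOL-Library.Countable"
begin

definition lcp :: "'a list \<Rightarrow> 'a list \<Rightarrow> nat" where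
  "lcp A B = (GREATEST l. l \<le> length A \<and> l \<le> length B \<and> take l A = take l B)"

definition coins :: "(nat \<Rightarrow> bool) measure" where
  "coins = PiM UNIV (\<lambda>_. measure_pmf (bernoulli_pmf (1/2)))"

text \<open>The transcript is the list of messages sent so far.
  Alice speaks when the transcript has even length, Bob when it has odd length;
  each message depends on the speaker's own input, the transcript and the public coins.\<close>

record 'a protocol =
  pmsg  :: "bool list list \<Rightarrow> (nat \<Rightarrow> bool) \<Rightarrow> 'a list \<Rightarrow> bool list"
  phalt :: "bool list list \<Rightarrow> (nat \<Rightarrow> bool) \<Rightarrow> bool"
  pout  :: "bool list list \<Rightarrow> (nat \<Rightarrow> bool) \<Rightarrow> nat"

fun ptrans :: "'a protocol \<Rightarrow> (nat \<Rightarrow> bool) \<Rightarrow> 'a list \<Rightarrow> 'a list \<Rightarrow> nat \<Rightarrow> bool list list" where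
  "ptrans P r A B 0 = []"
| "ptrans P r A B (Suc i) =
     (let t = ptrans P r A B i in t @ [pmsg P t r (if even i then A else B)])"

definition phalts_within :: "'a protocol \<Rightarrow> (nat \<Rightarrow> bool) \<Rightarrow> 'a list \<Rightarrow> 'a list \<Rightarrow> real \<Rightarrow> bool" where
  "phalts_within P r A B R = (\<exists>i. real i \<le> R \<and> phalt P (ptrans P r A B i) r)"

definition prounds :: "'a protocol \<Rightarrow> (nat \<Rightarrow> bool) \<Rightarrow> 'a list \<Rightarrow> 'a list \<Rightarrow> nat" where
  "prounds P r A B = (LEAST i. phalt P (ptrans P r A B i) r)"

definition ptranscript :: "'a protocol \<Rightarrow> (nat \<Rightarrow> bool) \<Rightarrow> 'a list \<Rightarrow> 'a list \<Rightarrow> bool list list" where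
  "ptranscript P r A B = ptrans P r A B (prounds P r A B)"

definition pbits :: "'a protocol \<Rightarrow> (nat \<Rightarrow> bool) \<Rightarrow> 'a list \<Rightarrow> 'a list \<Rightarrow> nat" where
  "pbits P r A B = sum_list (map length (ptranscript P r A B))"

definition poutput :: "'a protocol \<Rightarrow> (nat \<Rightarrow> bool) \<Rightarrow> 'a list \<Rightarrow> 'a list \<Rightarrow> nat" where
  "poutput P r A B = pout P (ptranscript P r A B) r"

end

(*
  Reading the public coins at positions to_nat (w, m), m < b, gives every string w a uniformly
  random b-bit fingerprint, independent for distinct strings: distinct strings collide with
  probability 2^-b, equal strings always agree.  A probe of position p, i.e. the bit p <= |A|
  followed by the fingerprint of the length-p prefix of A, is therefore accepted by Bob exactly
  when p <= lcp A B, barring collisions.  As acceptance is monotone in p, lcp A B is found by a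
  2^q-ary search: in each of R rounds Alice probes the 2^q - 1 inner division points of the
  current block and Bob answers in unary how many leading probes he accepts, which is the next
  base-2^q digit of lcp A B.  With 2^(R q) > |A| and R proportional to 1/eps this costs
  O(R^2 q 2^q) = O(|A|^eps) bits, and (R q + 3)-bit fingerprints make all 2^(R q) candidate
  positions probe correctly with probability 7/8.

  For bounds in terms of l = lcp A B, a doubling phase first probes the positions 2^2^j,
  j = 0, 1, ..., until Bob's first rejection at some stage j; this takes O(lg lg l) rounds and
  gives l < 2^2^j <= 2 (l + 1)^2, so the subsequent search with q = 2^j div R + 1 costs O(l^eps).
*)
theory Submission
  imports Defs
begin

section \<open>Public coins\<close>

lemma space_coins [simp]: "space coins = UNIV"
  by (simp add: coins_def space_PiM)

interpretation coins: prob_space coins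
  unfolding coins_def by (intro prob_space_PiM measure_pmf.prob_space_axioms)

lemma measurable_coin: "(\<lambda>r. r i) \<in> measurable coins (count_space UNIV)"
proof -
  have "(\<lambda>r. r i) \<in> measurable coins (measure_pmf (bernoulli_pmf (1/2)))"
    unfolding coins_def by (rule measurable_component_singleton) simp
  then show ?thesis by (simp add: measurable_cong_sets[OF refl sets_measure_pmf_count_space])
qed

lemma sets_coins_cylinder: "finite S \<Longrightarrow> {r. \<forall>i\<in>S. r i = g i} \<in> sets coins"
  using pred_intros_finite(3)[OF _ pred_count_space_const1[OF measurable_coin], of S]
  by (simp add: pred_def)

lemma measure_coins_cylinder:
  assumes "finite S"
  shows "measure coins {r. \<forall>i\<in>S. r i = g i} = (1/2) ^ card S"
proof -
  interpret product_prob_space "\<lambda>_::nat. measure_pmf (bernoulli_pmf (1/2))" UNIV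
    by (rule product_prob_spaceI) (rule measure_pmf.prob_space_axioms)
  have "emeasure coins {r \<in> space coins. \<forall>i\<in>S. r i \<in> {g i}}
      = (\<Prod>i\<in>S. emeasure (measure_pmf (bernoulli_pmf (1/2))) {g i})"
    unfolding coins_def by (rule emeasure_PiM_Collect) (use assms in auto)
  also have "\<dots> = (\<Prod>i\<in>S. ennreal (1/2))"
    by (intro prod.cong refl) (simp add: emeasure_pmf_single split: bool.splits)
  also have "\<dots> = ennreal ((1/2) ^ card S)"
    by (simp only: prod_constant ennreal_power)
  finally show ?thesis by (simp add: coins.emeasure_eq_measure)
qed

lemma measure_coins_ge_compl:
  assumes "U \<in> sets coins" "E \<in> sets coins" "\<And>r. r \<notin> U \<Longrightarrow> r \<in> E"
  shows "1 - measure coins U \<le> measure coins E"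
proof -
  have "1 - measure coins U = measure coins (space coins - U)"
    using coins.prob_compl[OF assms(1)] by simp
  also have "\<dots> \<le> measure coins E"
    using assms by (intro coins.finite_measure_mono) auto
  finally show ?thesis .
qed

definition finitely_dependent :: "((nat \<Rightarrow> bool) \<Rightarrow> 'b) \<Rightarrow> bool" where
  "finitely_dependent f \<longleftrightarrow> (\<exists>S. finite S \<and> (\<forall>r r'. (\<forall>i\<in>S. r i = r' i) \<longrightarrow> f r = f r'))"

lemma finitely_dependent_const: "finitely_dependent (\<lambda>r. c)"
  unfolding finitely_dependent_def by blast

lemma finitely_dependent_comp: "finitely_dependent f \<Longrightarrow> finitely_dependent (\<lambda>r. g (f r))"
  unfolding finitely_dependent_def by metis

lemma finitely_dependent_measurable:
  assumes "finitely_dependent f"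
  shows "f \<in> measurable coins (count_space UNIV)"
proof -
  obtain S where S: "finite S" "\<And>r r'. \<forall>i\<in>S. r i = r' i \<Longrightarrow> f r = f r'"
    using assms unfolding finitely_dependent_def by blast
  have "f -` X \<in> sets coins" for X
  proof -
    let ?G = "(\<lambda>r. restrict r S) ` (f -` X)"
    have "?G \<subseteq> PiE S (\<lambda>_. UNIV)" by auto
    then have "finite ?G" by (rule finite_subset) (auto intro: finite_PiE S(1))
    moreover have "f -` X = (\<Union>g\<in>?G. {r. \<forall>i\<in>S. r i = g i})"
      by (auto intro: S(2)[THEN subst[where P="\<lambda>y. y \<in> X"]])
    ultimately show ?thesis
      using sets_coins_cylinder[OF S(1)] by (metis (no_types, lifting) sets.finite_UN)
  qed
  then show ?thesis by (auto simp: measurable_def)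
qed

section \<open>Runs of protocols\<close>

lemma length_ptrans [simp]: "length (ptrans P r A B i) = i"
  by (induction i) (simp_all add: Let_def)

lemma take_ptrans: "i \<le> j \<Longrightarrow> take i (ptrans P r A B j) = ptrans P r A B i"
proof (induction j)
  case (Suc j)
  then show ?case
    by (cases "i = Suc j") (simp_all add: Let_def le_Suc_eq)
qed simp

lemma nth_ptrans:
  "n < i \<Longrightarrow> ptrans P r A B i ! n = pmsg P (ptrans P r A B n) r (if even n then A else B)"
  using take_ptrans[of "Suc n" i P r A B] nth_take[of n "Suc n" "ptrans P r A B i"]
  by (simp add: Let_def nth_append)

lemma ptrans_eq_map:
  assumes "\<And>n. n < N \<Longrightarrow> pmsg P (map T [0..<n]) r (if even n then A else B) = T n"
  shows "n \<le> N \<Longrightarrow> ptrans P r A B n = map T [0..<n]"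
  by (induction n) (simp_all add: Let_def assms)

lemma prounds_eqI:
  assumes "phalt P (ptrans P r A B N) r" "\<And>i. i < N \<Longrightarrow> \<not> phalt P (ptrans P r A B i) r"
  shows "prounds P r A B = N"
  unfolding prounds_def using assms by (intro Least_equality) (auto simp: not_less[symmetric])

lemma pbits_le:
  assumes "\<And>i. i < prounds P r A B \<Longrightarrow> length (ptranscript P r A B ! i) \<le> M"
  shows "pbits P r A B \<le> prounds P r A B * M"
proof -
  have "pbits P r A B \<le> sum_list (map (\<lambda>_. M) (ptranscript P r A B))"
    unfolding pbits_def using assms
    by (intro sum_list_mono) (auto simp: in_set_conv_nth ptranscript_def)
  then show ?thesis by (simp add: sum_list_triv ptranscript_def)
qed

lemma phalts_within_mono: "phalts_within P r A B T \<Longrightarrow> T \<le> T' \<Longrightarrow> phalts_within P r A B T'"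
  unfolding phalts_within_def by (meson order_trans)

definition finitely_dependent_protocol :: "'a protocol \<Rightarrow> bool" where
  "finitely_dependent_protocol P \<longleftrightarrow>
     (\<forall>t X. finitely_dependent (\<lambda>r. pmsg P t r X)) \<and>
     (\<forall>t. finitely_dependent (\<lambda>r. phalt P t r)) \<and>
     (\<forall>t. finitely_dependent (\<lambda>r. pout P t r))"

context
  fixes P :: "'a protocol"
  assumes P: "finitely_dependent_protocol P"
begin

lemma measurable_ptrans: "(\<lambda>r. ptrans P r A B i) \<in> measurable coins (count_space UNIV)"
proof (induction i)
  case (Suc i)
  have "(\<lambda>r. (\<lambda>t r. t @ [pmsg P t r (if even i then A else B)]) (ptrans P r A B i) r)
      \<in> measurable coins (count_space UNIV)"
  proof (rule measurable_compose_countable[OF _ Suc], rule finitely_dependent_measurable)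
    fix t
    have "finitely_dependent (\<lambda>r. pmsg P t r (if even i then A else B))"
      using P by (simp add: finitely_dependent_protocol_def)
    then show "finitely_dependent (\<lambda>r. t @ [pmsg P t r (if even i then A else B)])"
      by (rule finitely_dependent_comp)
  qed
  then show ?case by (simp add: Let_def)
qed simp

lemma measurable_phalt_ptrans:
  "(\<lambda>r. phalt P (ptrans P r A B i) r) \<in> measurable coins (count_space UNIV)"
proof (rule measurable_compose_countable[OF _ measurable_ptrans], rule finitely_dependent_measurable)
  show "finitely_dependent (phalt P t)" for t
    using P unfolding finitely_dependent_protocol_def by simp
qed

lemma measurable_ptranscript: "(\<lambda>r. ptranscript P r A B) \<in> measurable coins (count_space UNIV)"
  unfolding ptranscript_def prounds_def
  by (rule measurable_compose_countable[OF measurable_ptrans measurable_Least[OF measurable_phalt_ptrans]])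

lemma measurable_pbits: "(\<lambda>r. pbits P r A B) \<in> measurable coins (count_space UNIV)"
  unfolding pbits_def by (rule measurable_compose[OF measurable_ptranscript]) simp

lemma measurable_poutput: "(\<lambda>r. poutput P r A B) \<in> measurable coins (count_space UNIV)"
  unfolding poutput_def
proof (rule measurable_compose_countable[OF _ measurable_ptranscript], rule finitely_dependent_measurable)
  show "finitely_dependent (pout P t)" for t
    using P unfolding finitely_dependent_protocol_def by simp
qed

lemma pred_phalts_within: "Measurable.pred coins (\<lambda>r. phalts_within P r A B T)"
  unfolding phalts_within_def
  by (rule pred_intros_countable(2), rule pred_intros_conj1', rule measurable_phalt_ptrans)


lemma sets_protocol_run:
  "{r \<in> space coins. phalts_within P r A B T \<and> real (pbits P r A B) \<le> M \<and> poutput P r A B = l}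
    \<in> sets coins"
proof -
  have "Measurable.pred coins (\<lambda>r. real (pbits P r A B) \<le> M)"
    using measurable_compose[OF measurable_pbits measurable_count_space[where f="\<lambda>n::nat. real n \<le> M"]] .
  moreover have "Measurable.pred coins (\<lambda>r. poutput P r A B = l)"
    by (rule pred_count_space_const1, rule measurable_poutput)
  ultimately have "Measurable.pred coins
      (\<lambda>r. phalts_within P r A B T \<and> real (pbits P r A B) \<le> M \<and> poutput P r A B = l)"
    by (intro pred_intros_logic(3) pred_phalts_within)
  then show ?thesis by (rule predE)
qed
end

section \<open>Fingerprints and probes\<close>

definition fingerprint :: "(nat \<Rightarrow> bool) \<Rightarrow> nat \<Rightarrow> 'a::countable list \<Rightarrow> bool list" where
  "fingerprint r b w = map (\<lambda>m. r (to_nat (w, m))) [0..<b]"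

lemma length_fingerprint [simp]: "length (fingerprint r b w) = b"
  by (simp add: fingerprint_def)

lemma sets_fingerprint_eq: "{r. fingerprint r b w = fingerprint r b w'} \<in> sets coins"
proof -
  let ?S = "(\<lambda>m. to_nat (w, m)) ` {..<b} \<union> (\<lambda>m. to_nat (w', m)) ` {..<b}"
  have "finitely_dependent (\<lambda>r. fingerprint r b w = fingerprint r b w')"
    unfolding finitely_dependent_def
  proof (intro exI[of _ ?S] conjI allI impI)
    fix r r' :: "nat \<Rightarrow> bool"
    assume "\<forall>i\<in>?S. r i = r' i"
    then show "(fingerprint r b w = fingerprint r b w') = (fingerprint r' b w = fingerprint r' b w')"
      unfolding fingerprint_def by auto
  qed simp
  from measurable_sets[OF finitely_dependent_measurable[OF this], of "{True}"]
  show ?thesis by (simp add: vimage_def)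
qed

text \<open>The fingerprints of \<open>w \<noteq> w'\<close> read \<open>2 b\<close> distinct coins, and each of the \<open>2 ^ b\<close>
  common values of the two fingerprints fixes all of them.\<close>
lemma fingerprint_collision_prob:
  fixes w w' :: "'a::countable list"
  assumes "w \<noteq> w'"
  shows "measure coins {r. fingerprint r b w = fingerprint r b w'} \<le> (1/2) ^ b"
proof -
  define e where "e = (\<lambda>(c :: bool, m :: nat). to_nat (if c then w' else w, m))"
  have inj: "inj e"
    unfolding e_def inj_def using assms by (auto split: if_splits)
  define J where "J = e ` (UNIV \<times> {..<b})"
  have "finite J" unfolding J_def by simp
  have card_J: "card J = 2 * b"
    unfolding J_def by (subst card_image) (auto intro: inj_on_subset[OF inj] simp: card_cartesian_product)
  define V where "V = {..<b} \<rightarrow>\<^sub>E (UNIV :: bool set)"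
  have "finite V" "card V = 2 ^ b"
    unfolding V_def by (simp_all add: finite_PiE card_PiE)
  define F where "F v = {r. \<forall>i\<in>J. r i = v (snd (inv e i))}" for v :: "nat \<Rightarrow> bool"
  have F_sets: "F v \<in> sets coins" for v
    unfolding F_def using \<open>finite J\<close> by (rule sets_coins_cylinder)
  have collision_sub: "{r. fingerprint r b w = fingerprint r b w'} \<subseteq> (\<Union>v\<in>V. F v)"
  proof
    fix r assume "r \<in> {r. fingerprint r b w = fingerprint r b w'}"
    then have eq: "r (e (c, m)) = r (to_nat (w, m))" if "m < b" for c m
      using that unfolding fingerprint_def e_def by (cases c) (auto simp: list_eq_iff_nth_eq)
    let ?v = "restrict (\<lambda>m. r (to_nat (w, m))) {..<b}"
    have "r \<in> F ?v"
      unfolding F_def J_def using eq by (auto simp: inv_f_f[OF inj])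
    moreover have "?v \<in> V" unfolding V_def by simp
    ultimately show "r \<in> (\<Union>v\<in>V. F v)" by blast
  qed
  have "measure coins {r. fingerprint r b w = fingerprint r b w'} \<le> measure coins (\<Union>v\<in>V. F v)"
    using collision_sub \<open>finite V\<close> F_sets by (intro coins.finite_measure_mono) auto
  also have "\<dots> \<le> (\<Sum>v\<in>V. measure coins (F v))"
    using \<open>finite V\<close> F_sets by (intro coins.finite_measure_subadditive_finite) auto
  also have "\<dots> = 2 ^ b * (1/2) ^ (2 * b)"
    using \<open>card V = 2 ^ b\<close> \<open>finite J\<close> by (simp add: F_def measure_coins_cylinder card_J)
  also have "\<dots> = (1/2) ^ b"
    by (simp only: mult_2 power_add mult.assoc[symmetric] power_mult_distrib[symmetric]) simp
  finally show ?thesis .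
qed

lemma le_lcp_iff: "p \<le> lcp A B \<longleftrightarrow> p \<le> length A \<and> p \<le> length B \<and> take p A = take p B"
proof -
  let ?common = "\<lambda>l. l \<le> length A \<and> l \<le> length B \<and> take l A = take l B"
  have lcp: "?common (lcp A B)"
    unfolding lcp_def by (rule GreatestI_nat[of ?common 0 "length A"]) auto
  show ?thesis
  proof
    assume "p \<le> lcp A B"
    then have "take p A = take p (take (lcp A B) A)" by (simp add: min_def)
    also have "\<dots> = take p B" using lcp \<open>p \<le> lcp A B\<close> by (simp add: min_def)
    finally show "?common p" using lcp \<open>p \<le> lcp A B\<close> by simp
  next
    assume "?common p"
    then show "p \<le> lcp A B"
      unfolding lcp_def by (rule Greatest_le_nat[of _ p "length A"]) auto
  qed
qed

lemma lcp_le_length: "lcp A B \<le> length A"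
  using le_lcp_iff[of "lcp A B" A B] by simp

definition prefix_fingerprint :: "(nat \<Rightarrow> bool) \<Rightarrow> 'a::countable list \<Rightarrow> nat \<Rightarrow> nat \<Rightarrow> bool list" where
  "prefix_fingerprint r X b p = fingerprint r b (take p X)"

lemma length_prefix_fingerprint [simp]: "length (prefix_fingerprint r X b p) = b"
  by (simp add: prefix_fingerprint_def)

lemma finitely_dependent_prefix_fingerprint:
  assumes "\<And>h h'. h b = h' b \<Longrightarrow> h b' = h' b' \<Longrightarrow> F h = F h'"
  shows "finitely_dependent (\<lambda>r. F (prefix_fingerprint r X))"
proof -
  let ?S = "\<lambda>c. (\<lambda>(p, m). to_nat (take p X, m)) ` ({..length X} \<times> {..<c})"
  have agree: "prefix_fingerprint r X c = prefix_fingerprint r' X c"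
    if coins_agree: "\<forall>i\<in>?S c. r i = r' i" for r r' c
  proof
    fix p
    have "to_nat (take p X, m) \<in> ?S c" if "m < c" for m
    proof (rule image_eqI)
      show "to_nat (take p X, m) = (\<lambda>(p, m). to_nat (take p X, m)) (min p (length X), m)"
        by (simp add: min_def)
    qed (use that in simp)
    then have "r (to_nat (take p X, m)) = r' (to_nat (take p X, m))" if "m < c" for m
      using coins_agree that by blast
    then show "prefix_fingerprint r X c p = prefix_fingerprint r' X c p"
      unfolding prefix_fingerprint_def fingerprint_def by (intro map_cong) auto
  qed
  show ?thesis
    unfolding finitely_dependent_def
  proof (intro exI conjI allI impI)
    show "finite (?S b \<union> ?S b')" by simp
    fix r r' :: "nat \<Rightarrow> bool"
    assume "\<forall>i\<in>?S b \<union> ?S b'. r i = r' i"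
    then have "prefix_fingerprint r X b = prefix_fingerprint r' X b"
      and "prefix_fingerprint r X b' = prefix_fingerprint r' X b'"
      by (simp_all add: agree)
    then show "F (prefix_fingerprint r X) = F (prefix_fingerprint r' X)" by (rule assms)
  qed
qed

text \<open>In a probe, \<open>n\<close> is the length of the sender's string and \<open>h b p\<close> the fingerprint of its
  prefix of length \<open>p\<close>.  The leading bit matters for \<open>p\<close> beyond both strings, where
  \<open>take p A = A\<close> and \<open>take p B = B\<close> may well coincide.\<close>
definition probe :: "(nat \<Rightarrow> nat \<Rightarrow> bool list) \<Rightarrow> nat \<Rightarrow> nat \<Rightarrow> nat \<Rightarrow> bool list" where
  "probe h n b p = (p \<le> n) # h b p"

definition probe_accepts :: "(nat \<Rightarrow> nat \<Rightarrow> bool list) \<Rightarrow> nat \<Rightarrow> nat \<Rightarrow> nat \<Rightarrow> bool list \<Rightarrow> bool" where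
  "probe_accepts h n b p c \<longleftrightarrow> hd c \<and> c = probe h n b p"

lemma length_probe: "(\<And>b p. length (h b p) = b) \<Longrightarrow> length (probe h n b p) = Suc b"
  by (simp add: probe_def)

lemma probe_accepts_probe_iff:
  "probe_accepts (prefix_fingerprint r B) (length B) b p (probe (prefix_fingerprint r A) (length A) b p)
    \<longleftrightarrow> p \<le> length A \<and> p \<le> length B \<and> fingerprint r b (take p A) = fingerprint r b (take p B)"
  by (auto simp: probe_accepts_def probe_def prefix_fingerprint_def)

definition probes_correct :: "(nat \<Rightarrow> bool) \<Rightarrow> 'a::countable list \<Rightarrow> 'a list \<Rightarrow> nat \<Rightarrow> nat set \<Rightarrow> bool" where
  "probes_correct r A B b Ps \<longleftrightarrow> (\<forall>p\<in>Ps.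
     probe_accepts (prefix_fingerprint r B) (length B) b p (probe (prefix_fingerprint r A) (length A) b p)
     \<longleftrightarrow> p \<le> lcp A B)"

text \<open>Probes err only on positions beyond the common prefix, and only by a fingerprint collision.\<close>
lemma probes_correct_prob:
  fixes A B :: "'a::countable list"
  assumes "finite Ps"
  shows "\<exists>U\<in>sets coins. measure coins U \<le> card Ps * (1/2) ^ b \<and>
           (\<forall>r. r \<notin> U \<longrightarrow> probes_correct r A B b Ps)"
proof -
  define Bad where "Bad = {p\<in>Ps. take p A \<noteq> take p B}"
  define U where "U = (\<Union>p\<in>Bad. {r. fingerprint r b (take p A) = fingerprint r b (take p B)})"
  have "finite Bad" using assms unfolding Bad_def by simp
  then have "U \<in> sets coins" unfolding U_def using sets_fingerprint_eq by blast
  have "measure coins U \<le> (\<Sum>p\<in>Bad. measure coins {r. fingerprint r b (take p A) = fingerprint r b (take p B)})"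
    unfolding U_def using \<open>finite Bad\<close> sets_fingerprint_eq
    by (intro coins.finite_measure_subadditive_finite) auto
  also have "\<dots> \<le> (\<Sum>p\<in>Bad. (1/2) ^ b)"
    by (intro sum_mono fingerprint_collision_prob) (simp add: Bad_def)
  also have "\<dots> \<le> card Ps * (1/2) ^ b"
    using assms by (simp add: Bad_def card_mono mult_right_mono)
  finally have "measure coins U \<le> card Ps * (1/2) ^ b" .
  moreover have "probes_correct r A B b Ps" if "r \<notin> U" for r
    unfolding probes_correct_def probe_accepts_probe_iff le_lcp_iff
  proof (intro ballI)
    fix p assume "p \<in> Ps"
    then have "fingerprint r b (take p A) = fingerprint r b (take p B) \<longleftrightarrow> take p A = take p B"
      using that by (auto simp: U_def Bad_def)
    then show "p \<le> length A \<and> p \<le> length B \<and> fingerprint r b (take p A) = fingerprint r b (take p B)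
        \<longleftrightarrow> p \<le> length A \<and> p \<le> length B \<and> take p A = take p B" by simp
  qed
  ultimately show ?thesis using \<open>U \<in> sets coins\<close> by blast
qed

section \<open>Multiway search\<close>

definition block_width :: "nat \<Rightarrow> nat \<Rightarrow> nat \<Rightarrow> nat" where
  "block_width q R u = 2 ^ (q * (R - u))"

lemma block_width_pos [simp]: "0 < block_width q R u"
  by (simp add: block_width_def)

lemma block_width_R [simp]: "block_width q R R = 1"
  by (simp add: block_width_def)

lemma block_width_Suc: "u < R \<Longrightarrow> block_width q R u = 2 ^ q * block_width q R (Suc u)"
  unfolding block_width_def by (metis Suc_diff_Suc mult_Suc_right power_add)

lemma block_width_dvd: "u \<le> R \<Longrightarrow> block_width q R u dvd block_width q R 0"
  unfolding block_width_def by (intro le_imp_power_dvd) simp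

definition digit :: "nat \<Rightarrow> nat \<Rightarrow> nat \<Rightarrow> nat \<Rightarrow> nat" where
  "digit q R l u = l mod block_width q R u div block_width q R (Suc u)"

definition round_down :: "nat \<Rightarrow> nat \<Rightarrow> nat \<Rightarrow> nat \<Rightarrow> nat" where
  "round_down q R l u = l - l mod block_width q R u"

definition from_digits :: "nat \<Rightarrow> nat \<Rightarrow> nat list \<Rightarrow> nat" where
  "from_digits q R ds = (\<Sum>v<length ds. ds ! v * block_width q R (Suc v))"

lemma from_digits_map_upt:
  "from_digits q R (map f [0..<u]) = (\<Sum>v<u. f v * block_width q R (Suc v))"
  unfolding from_digits_def by (intro sum.cong) auto

lemma digit_less: "digit q R l u < 2 ^ q"
proof (cases "u < R")
  case True
  then have "l mod block_width q R u < 2 ^ q * block_width q R (Suc u)"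
    by (metis block_width_Suc block_width_pos mod_less_divisor)
  then show ?thesis
    unfolding digit_def by (simp add: div_less_iff_less_mult)
next
  case False
  then show ?thesis by (simp add: digit_def block_width_def)
qed

lemma from_digits_digits:
  assumes "l < block_width q R 0" "u \<le> R"
  shows "from_digits q R (map (digit q R l) [0..<u]) = round_down q R l u"
  unfolding from_digits_map_upt using assms(2)
proof (induction u)
  case 0
  then show ?case using assms(1) by (simp add: round_down_def)
next
  case (Suc u)
  let ?w = "block_width q R u" and ?w' = "block_width q R (Suc u)"
  have "?w = 2 ^ q * ?w'" using Suc.prems by (intro block_width_Suc) simp
  then have "l mod ?w' = l mod ?w mod ?w'" by (simp add: mod_mod_cancel)
  moreover have "l mod ?w = l mod ?w div ?w' * ?w' + l mod ?w mod ?w'" by simp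
  moreover have "l mod ?w \<le> l" by simp
  moreover have "(\<Sum>v<Suc u. digit q R l v * block_width q R (Suc v))
      = round_down q R l u + digit q R l u * ?w'"
    using Suc by simp
  ultimately show ?case
    unfolding round_down_def digit_def by linarith
qed

lemma from_digits_all_digits:
  "l < block_width q R 0 \<Longrightarrow> from_digits q R (map (digit q R l) [0..<R]) = l"
  by (simp add: from_digits_digits round_down_def)

lemma round_down_add_le_iff:
  "round_down q R l u + i * block_width q R (Suc u) \<le> l \<longleftrightarrow> i \<le> digit q R l u"
proof -
  have "l mod block_width q R u \<le> l" by simp
  then have "round_down q R l u + i * block_width q R (Suc u) \<le> l
      \<longleftrightarrow> i * block_width q R (Suc u) \<le> l mod block_width q R u"
    unfolding round_down_def by linarith
  then show ?thesis
    unfolding digit_def by (simp add: less_eq_div_iff_mult_less_eq)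
qed

lemma round_down_add_less:
  assumes "l < block_width q R 0" "u < R" "i < 2 ^ q"
  shows "round_down q R l u + i * block_width q R (Suc u) < block_width q R 0"
proof -
  let ?w = "block_width q R u"
  obtain k where k: "block_width q R 0 = ?w * k"
    using block_width_dvd[of u R q] assms(2) by (auto elim: dvdE)
  have "round_down q R l u = ?w * (l div ?w)"
    unfolding round_down_def by (simp add: minus_mod_eq_mult_div)
  moreover have "l div ?w < k"
    using assms(1) k by (simp add: div_less_iff_less_mult mult.commute)
  ultimately have "round_down q R l u + ?w \<le> block_width q R 0"
    using k by (metis add.commute mult_Suc_right mult_le_mono2 Suc_leI)
  moreover have "i * block_width q R (Suc u) < ?w"
    using assms(2,3) by (simp add: block_width_Suc)
  ultimately show ?thesis by linarith
qed

lemma take_drop_concat_equal_length: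
  assumes "\<forall>x\<in>set xs. length x = c" "i < length xs"
  shows "take c (drop (i * c) (concat xs)) = xs ! i"
  using assms
proof (induction xs arbitrary: i)
  case (Cons x xs)
  then show ?case by (cases i) simp_all
qed simp

lemma length_takeWhile_upt_le:
  assumes "a < k"
  shows "length (takeWhile id (map (\<lambda>i. i \<le> a) [1..<k])) = a"
proof -
  have "[1..<k] = [1..<Suc a] @ [Suc a..<k]"
    using upt_add_eq_append[of 1 "Suc a" "k - Suc a"] assms by simp
  moreover have "takeWhile id (map (\<lambda>i. i \<le> a) [Suc a..<k]) = []"
  proof (cases "Suc a < k")
    case True
    then show ?thesis by (simp add: upt_conv_Cons)
  qed simp
  ultimately have "takeWhile id (map (\<lambda>i. i \<le> a) [1..<k]) = map (\<lambda>i. i \<le> a) [1..<Suc a]"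
    by (simp add: takeWhile_append)
  then show ?thesis by simp
qed

text \<open>Round \<open>u\<close> of the \<open>2^q\<close>-ary search: the unknown \<open>l\<close> lies in a block of width
  \<open>block_width q R u\<close> starting at \<open>lo\<close>, which Alice cuts into \<open>2^q\<close> sub-blocks, probing the
  left end of each but the first; Bob answers in unary how many leading probes he accepts.\<close>
definition probe_batch ::
    "(nat \<Rightarrow> nat \<Rightarrow> bool list) \<Rightarrow> nat \<Rightarrow> nat \<Rightarrow> nat \<Rightarrow> nat \<Rightarrow> nat \<Rightarrow> nat \<Rightarrow> bool list" where
  "probe_batch h n q R b lo u =
     concat (map (\<lambda>i. probe h n b (lo + i * block_width q R (Suc u))) [1..<2 ^ q])"

definition chunk :: "nat \<Rightarrow> nat \<Rightarrow> bool list \<Rightarrow> bool list" where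
  "chunk c i m = take c (drop ((i - 1) * c) m)"

definition batch_reply ::
    "(nat \<Rightarrow> nat \<Rightarrow> bool list) \<Rightarrow> nat \<Rightarrow> nat \<Rightarrow> nat \<Rightarrow> nat \<Rightarrow> nat \<Rightarrow> nat \<Rightarrow> bool list \<Rightarrow> bool list" where
  "batch_reply h n q R b lo u m = replicate (length (takeWhile id
     (map (\<lambda>i. probe_accepts h n b (lo + i * block_width q R (Suc u)) (chunk (Suc b) i m))
       [1..<2 ^ q]))) True"

lemma length_probe_batch:
  assumes "\<And>b p. length (h b p) = b"
  shows "length (probe_batch h n q R b lo u) \<le> 2 ^ q * Suc b"
proof -
  have "length (probe_batch h n q R b lo u) = length [1..<2 ^ q] * Suc b"
    unfolding probe_batch_def length_concat map_map o_def
    using length_probe[of h, OF assms] by (simp add: sum_list_triv)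
  also have "\<dots> \<le> 2 ^ q * Suc b"
    by (intro mult_le_mono1) simp
  finally show ?thesis .
qed

lemma chunk_probe_batch:
  assumes "\<And>b p. length (h b p) = b" and "1 \<le> i" "i < 2 ^ q"
  shows "chunk (Suc b) i (probe_batch h n q R b lo u) = probe h n b (lo + i * block_width q R (Suc u))"
proof -
  have "chunk (Suc b) i (probe_batch h n q R b lo u)
      = map (\<lambda>i. probe h n b (lo + i * block_width q R (Suc u))) [1..<2 ^ q] ! (i - 1)"
    unfolding chunk_def probe_batch_def
    by (rule take_drop_concat_equal_length) (use assms length_probe[of h, OF assms(1)] in auto)
  then show ?thesis using assms(2,3) by simp
qed

lemma batch_reply_probe_batch:
  assumes "\<And>b p. length (hA b p) = b"
    and correct: "\<forall>p < block_width q R 0. probe_accepts hB nB b p (probe hA nA b p) \<longleftrightarrow> p \<le> l"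
    and "l < block_width q R 0" "u < R"
  shows "batch_reply hB nB q R b (round_down q R l u) u (probe_batch hA nA q R b (round_down q R l u) u)
    = replicate (digit q R l u) True"
proof -
  let ?lo = "round_down q R l u" and ?w = "block_width q R (Suc u)"
  have "map (\<lambda>i. probe_accepts hB nB b (?lo + i * ?w) (chunk (Suc b) i (probe_batch hA nA q R b ?lo u)))
      [1..<2 ^ q] = map (\<lambda>i. i \<le> digit q R l u) [1..<2 ^ q]"
  proof (rule map_cong[OF refl])
    fix i assume "i \<in> set [1..<2 ^ q]"
    then have "1 \<le> i" "i < 2 ^ q" by auto
    then show "probe_accepts hB nB b (?lo + i * ?w) (chunk (Suc b) i (probe_batch hA nA q R b ?lo u))
        \<longleftrightarrow> i \<le> digit q R l u"
      using chunk_probe_batch[OF assms(1)] correct round_down_add_less[OF assms(3,4)]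
        round_down_add_le_iff by simp
  qed
  then show ?thesis
    unfolding batch_reply_def by (simp only: length_takeWhile_upt_le[OF digit_less])
qed

text \<open>The \<open>2 R\<close> messages of the search start at transcript position \<open>off\<close>; Bob's replies so
  far are the leading digits of the unknown, which determine the current block.\<close>
definition search_msg ::
    "(nat \<Rightarrow> nat \<Rightarrow> bool list) \<Rightarrow> nat \<Rightarrow> nat \<Rightarrow> nat \<Rightarrow> nat \<Rightarrow> nat \<Rightarrow> bool list list \<Rightarrow> bool list" where
  "search_msg h n q R b off t =
     (let u = (length t - off) div 2;
          lo = from_digits q R (map (\<lambda>v. length (t ! (off + 2 * v + 1))) [0..<u])
      in if even (length t - off) then probe_batch h n q R b lo u
         else batch_reply h n q R b lo u (last t))"

text \<open>The search messages of a run in which Bob accepts exactly the probes of positions \<open>\<le> l\<close>.\<close>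
definition ideal_search_msg ::
    "(nat \<Rightarrow> nat \<Rightarrow> bool list) \<Rightarrow> nat \<Rightarrow> nat \<Rightarrow> nat \<Rightarrow> nat \<Rightarrow> nat \<Rightarrow> nat \<Rightarrow> nat \<Rightarrow> bool list" where
  "ideal_search_msg hA nA q R b l off m =
     (let u = (m - off) div 2
      in if even (m - off) then probe_batch hA nA q R b (round_down q R l u) u
         else replicate (digit q R l u) True)"

lemma length_search_msg:
  assumes "\<And>b p. length (h b p) = b"
  shows "length (search_msg h n q R b off t) \<le> 2 ^ q * Suc b"
proof -
  have "length (batch_reply h n q R b lo u m) \<le> length [1..<2 ^ q]" for lo u m
    unfolding batch_reply_def by (simp add: order_trans[OF length_takeWhile_le])
  then have "length (batch_reply h n q R b lo u m) \<le> 2 ^ q * Suc b" for lo u m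
    by (rule order_trans) simp
  then show ?thesis
    unfolding search_msg_def Let_def using length_probe_batch[OF assms] by simp
qed

lemma length_ideal_search_msg:
  assumes "\<And>b p. length (hA b p) = b"
  shows "length (ideal_search_msg hA nA q R b l off m) \<le> 2 ^ q * Suc b"
proof -
  have "digit q R l u \<le> 2 ^ q * Suc b" for u
    using digit_less[of q R l u] by (simp add: less_imp_le_nat trans_le_add1)
  then show ?thesis
    unfolding ideal_search_msg_def Let_def using length_probe_batch[OF assms] by simp
qed

lemma search_msg_cong:
  assumes "h b = h' b"
  shows "search_msg h n q R b off t = search_msg h' n q R b off t"
proof -
  have "h b p = h' b p" for p using assms by simp
  then show ?thesis
    unfolding search_msg_def probe_batch_def batch_reply_def probe_accepts_def probe_def by (simp only:)
qed

lemma from_digits_search_replies: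
  assumes "l < block_width q R 0" "u \<le> R"
    and "\<And>v. v < u \<Longrightarrow> length (t ! (off + 2 * v + 1)) = digit q R l v"
  shows "from_digits q R (map (\<lambda>v. length (t ! (off + 2 * v + 1))) [0..<u]) = round_down q R l u"
proof -
  have replies: "map (\<lambda>v. length (t ! (off + 2 * v + 1))) [0..<u] = map (digit q R l) [0..<u]"
    using assms(3) by (intro map_cong) auto
  show ?thesis unfolding replies by (rule from_digits_digits[OF assms(1,2)])
qed

lemma search_msg_ideal:
  assumes "\<And>b p. length (hA b p) = b"
    and correct: "\<forall>p < block_width q R 0. probe_accepts hB nB b p (probe hA nA b p) \<longleftrightarrow> p \<le> l"
    and "l < block_width q R 0"
    and "length t = n" "off \<le> n" "(n - off) div 2 < R" "even off"
    and ideal: "\<And>m. off \<le> m \<Longrightarrow> m < n \<Longrightarrow> t ! m = ideal_search_msg hA nA q R b l off m"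
  shows "search_msg (if even n then hA else hB) (if even n then nA else nB) q R b off t
    = ideal_search_msg hA nA q R b l off n"
proof -
  let ?u = "(n - off) div 2"
  have "length (t ! (off + 2 * v + 1)) = digit q R l v" if "v < ?u" for v
    using that ideal[of "off + 2 * v + 1"] by (simp add: ideal_search_msg_def)
  then have lo: "from_digits q R (map (\<lambda>v. length (t ! (off + 2 * v + 1))) [0..<?u]) = round_down q R l ?u"
    using assms(3,6) by (intro from_digits_search_replies) simp_all
  show ?thesis
  proof (cases "even n")
    case True
    then show ?thesis
      using \<open>even off\<close> unfolding search_msg_def ideal_search_msg_def Let_def \<open>length t = n\<close> lo by simp
  next
    case False
    then have odd_diff: "odd (n - off)" and "off < n"
      using \<open>even off\<close> \<open>off \<le> n\<close> by (auto simp: le_less)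
    from odd_diff obtain k where k: "n - off = 2 * k + 1" by (rule oddE)
    have "t \<noteq> []" using \<open>length t = n\<close> \<open>off < n\<close> by auto
    then have "last t = t ! (n - 1)" using \<open>length t = n\<close> by (simp add: last_conv_nth)
    also have "\<dots> = ideal_search_msg hA nA q R b l off (n - 1)"
      using \<open>off < n\<close> by (intro ideal) auto
    also have "\<dots> = probe_batch hA nA q R b (round_down q R l ?u) ?u"
    proof -
      have "n - 1 - off = 2 * k" "?u = k" using k by arith+
      then show ?thesis unfolding ideal_search_msg_def Let_def by simp
    qed
    finally have last_t: "last t = probe_batch hA nA q R b (round_down q R l ?u) ?u" .
    have "search_msg hB nB q R b off t = batch_reply hB nB q R b (round_down q R l ?u) ?u (last t)"
      using odd_diff unfolding search_msg_def Let_def \<open>length t = n\<close> lo by simp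
    also have "\<dots> = replicate (digit q R l ?u) True"
      unfolding last_t by (rule batch_reply_probe_batch[OF assms(1) correct assms(3,6)])
    also have "\<dots> = ideal_search_msg hA nA q R b l off n"
      using odd_diff by (simp add: ideal_search_msg_def)
    finally show ?thesis using False by simp
  qed
qed

lemma search_probes_correct_prob:
  fixes A B :: "'a::countable list"
  shows "\<exists>U\<in>sets coins. measure coins U \<le> 1/8 \<and>
           (\<forall>r. r \<notin> U \<longrightarrow> probes_correct r A B (R * q + 3) {..<block_width q R 0})"
proof -
  have "card {..<block_width q R 0} * (1/2 :: real) ^ (R * q + 3) = (2 * (1/2)) ^ (R * q) * (1/2) ^ 3"
    by (simp only: card_lessThan block_width_def diff_zero of_nat_power power_add power_mult_distrib
        mult.assoc mult.commute[of q R]) simp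
  also have "\<dots> = 1/8" by (simp add: power3_eq_cube)
  finally have "card {..<block_width q R 0} * (1/2 :: real) ^ (R * q + 3) = 1/8" .
  then show ?thesis
    using probes_correct_prob[where Ps="{..<block_width q R 0}" and b="R * q + 3" and A=A and B=B]
    by (metis finite_lessThan)
qed

lemma pow2_mult_linear_le: "2 ^ q * (R * q + 4) \<le> (R + 4) * (2 ^ q) ^ 2"
proof -
  have "q \<le> 2 ^ q" using less_exp[of q] by simp
  then have "R * q + 4 \<le> (R + 4) * 2 ^ q"
    using one_le_power[of 2 q] by (simp add: algebra_simps add_mono)
  then show ?thesis
    by (simp add: power2_eq_square)
qed

lemma cube_le_powr:
  fixes k x R c Y :: nat and \<epsilon> :: real
  assumes "k \<le> 2 * x" "x ^ R \<le> Y ^ c" "R \<ge> 1" "3 * c / R \<le> \<epsilon>" "1 \<le> Y"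
  shows "real k ^ 3 \<le> 8 * real Y powr \<epsilon>"
proof -
  have x_le: "real x \<le> real Y powr (c / R)"
  proof (cases "x = 0")
    case False
    then have "real x = (real x ^ R) powr (1 / R)"
      using assms(3) by (simp add: powr_realpow[symmetric] powr_powr)
    also have "\<dots> \<le> (real Y ^ c) powr (1 / R)"
      by (intro powr_mono2) (use assms(2) in \<open>auto simp flip: of_nat_power\<close>)
    also have "\<dots> = real Y powr (c / R)"
      using assms(5) by (simp add: powr_realpow[symmetric] powr_powr)
    finally show ?thesis .
  qed simp
  have "real k ^ 3 \<le> (2 * real x) ^ 3"
    using assms(1) by (intro power_mono) simp_all
  also have "\<dots> = 8 * real x ^ 3" by simp
  also have "\<dots> \<le> 8 * (real Y powr (c / R)) ^ 3"
    using x_le by (intro mult_left_mono power_mono) simp_all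
  also have "\<dots> = 8 * real Y powr (3 * c / R)"
    using assms(5) by (simp add: powr_power)
  also have "\<dots> \<le> 8 * real Y powr \<epsilon>"
    using assms(4,5) by (intro mult_left_mono powr_mono) simp_all
  finally show ?thesis .
qed

lemma ex_nat_divide_le:
  fixes c \<epsilon> :: real and m :: nat
  assumes "\<epsilon> > 0"
  shows "\<exists>R::nat. R \<ge> m \<and> R \<ge> 1 \<and> c / R \<le> \<epsilon>"
proof (intro exI conjI)
  let ?R = "max (max m 1) (nat \<lceil>c / \<epsilon>\<rceil>)"
  show "?R \<ge> m" "?R \<ge> 1" by simp_all
  have "c / \<epsilon> \<le> real ?R"
    using real_nat_ceiling_ge[of "c / \<epsilon>"] by (simp add: le_max_iff_disj)
  then show "c / ?R \<le> \<epsilon>"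
    using assms \<open>?R \<ge> 1\<close> by (simp add: divide_le_eq pos_divide_le_eq mult.commute)
qed

section \<open>A constant number of rounds\<close>

definition fixed_round_q :: "nat \<Rightarrow> nat \<Rightarrow> nat" where
  "fixed_round_q R n = (LEAST q. n < 2 ^ (R * q))"

lemma less_pow_fixed_round_q: "R \<ge> 1 \<Longrightarrow> n < 2 ^ (R * fixed_round_q R n)"
  unfolding fixed_round_q_def
proof (rule LeastI)
  assume "R \<ge> 1"
  have "n < 2 ^ n" by (rule less_exp)
  also have "\<dots> \<le> 2 ^ (R * n)" using \<open>R \<ge> 1\<close> by (intro power_increasing) simp_all
  finally show "n < 2 ^ (R * n)" .
qed

lemma fixed_round_q_root: "\<exists>x. 2 ^ fixed_round_q R n \<le> 2 * x \<and> x ^ R \<le> 1 + n"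
proof (cases "fixed_round_q R n")
  case 0
  then show ?thesis by (intro exI[of _ 1]) simp
next
  case (Suc q)
  then have "\<not> n < 2 ^ (R * q)" unfolding fixed_round_q_def by (metis lessI not_less_Least)
  then have "(2 ^ q) ^ R \<le> 1 + n" by (simp add: power_mult[symmetric] mult.commute)
  then show ?thesis using Suc by (intro exI[of _ "2 ^ q"]) simp
qed

text \<open>Alice announces \<open>q\<close> in unary, Bob's empty reply hands the turn back, and a \<open>2^q\<close>-ary
  search over the \<open>2^(R q)\<close> positions up to \<open>length A\<close> follows.  Fingerprints of
  \<open>R q + 3\<close> bits make all these positions probe correctly except with probability \<open>1/8\<close>.\<close>
definition fixed_round_protocol :: "nat \<Rightarrow> 'a::countable protocol" where
  "fixed_round_protocol R =
    \<lparr>pmsg = (\<lambda>t r X. if t = [] then replicate (fixed_round_q R (length X)) True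
                     else if length t = 1 then []
                     else search_msg (prefix_fingerprint r X) (length X) (length (t ! 0)) R
                            (R * length (t ! 0) + 3) 2 t),
     phalt = (\<lambda>t r. 2 + 2 * R \<le> length t),
     pout = (\<lambda>t r. from_digits (length (t ! 0)) R (map (\<lambda>v. length (t ! (2 + 2 * v + 1))) [0..<R]))\<rparr>"

lemma fixed_round_protocol_simps [simp]:
  "pmsg (fixed_round_protocol R) t r X =
     (if t = [] then replicate (fixed_round_q R (length X)) True
      else if length t = 1 then []
      else search_msg (prefix_fingerprint r X) (length X) (length (t ! 0)) R (R * length (t ! 0) + 3) 2 t)"
  "phalt (fixed_round_protocol R) t r \<longleftrightarrow> 2 + 2 * R \<le> length t"
  "pout (fixed_round_protocol R) t r =
     from_digits (length (t ! 0)) R (map (\<lambda>v. length (t ! (2 + 2 * v + 1))) [0..<R])"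
  by (simp_all add: fixed_round_protocol_def)

definition fixed_round_transcript ::
    "nat \<Rightarrow> nat \<Rightarrow> (nat \<Rightarrow> nat \<Rightarrow> bool list) \<Rightarrow> nat \<Rightarrow> nat \<Rightarrow> nat \<Rightarrow> bool list" where
  "fixed_round_transcript R q h n l m =
     (if m = 0 then replicate q True else if m = 1 then []
      else ideal_search_msg h n q R (R * q + 3) l 2 m)"

lemma finitely_dependent_fixed_round_protocol:
  "finitely_dependent_protocol (fixed_round_protocol R)"
  unfolding finitely_dependent_protocol_def
proof (intro conjI allI)
  fix t :: "bool list list" and X :: "'a list"
  let ?b = "R * length (t ! 0) + 3"
  let ?msg = "\<lambda>h. if t = [] then replicate (fixed_round_q R (length X)) True
    else if length t = 1 then [] else search_msg h (length X) (length (t ! 0)) R ?b 2 t"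
  have "finitely_dependent (\<lambda>r. ?msg (prefix_fingerprint r X))"
  proof (rule finitely_dependent_prefix_fingerprint)
    fix h h' :: "nat \<Rightarrow> nat \<Rightarrow> bool list"
    assume "h ?b = h' ?b"
    then show "?msg h = ?msg h'" using search_msg_cong[of h ?b h'] by simp
  qed
  then show "finitely_dependent (\<lambda>r. pmsg (fixed_round_protocol R) t r X)" by simp
qed (unfold fixed_round_protocol_def, simp_all add: finitely_dependent_const)

lemma prounds_fixed_round_protocol: "prounds (fixed_round_protocol R) r A B = 2 + 2 * R"
  by (rule prounds_eqI) (simp_all del: ptrans.simps)

lemma pbits_fixed_round_protocol:
  fixes R :: nat and A B :: "'a::countable list"
  defines "q \<equiv> fixed_round_q R (length A)"
  shows "pbits (fixed_round_protocol R) r A B \<le> (2 + 2 * R) * (2 ^ q * (R * q + 4))"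
proof -
  have "length (pmsg (fixed_round_protocol R) (ptrans (fixed_round_protocol R) r A B i) r
      (if even i then A else B)) \<le> 2 ^ q * (R * q + 4)" for i
  proof -
    consider "i = 0" | "i = 1" | "i \<ge> 2" by linarith
    then show ?thesis
    proof cases
      case 1
      have "q \<le> 2 ^ q * (R * q + 4)"
        using less_exp[of q] le_add2[of 4 "R * q"] mult_le_mono2[of 1 "R * q + 4" "2 ^ q"] by linarith
      then show ?thesis using 1 by (simp add: q_def)
    next
      case 3
      then have "ptrans (fixed_round_protocol R) r A B i ! 0 = replicate q True"
        using nth_ptrans[of 0 i "fixed_round_protocol R" r A B] by (simp add: q_def)
      moreover have "ptrans (fixed_round_protocol R) r A B i \<noteq> []"
        using 3 by (simp flip: length_greater_0_conv del: ptrans.simps)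
      moreover have "length (search_msg (prefix_fingerprint r X) n q R (R * q + 3) 2 t) \<le> 2 ^ q * (R * q + 4)"
        for X :: "'a list" and n t
        using length_search_msg[of "prefix_fingerprint r X" n q R "R * q + 3" 2 t] by (simp add: add.commute)
      ultimately show ?thesis by (simp del: ptrans.simps)
    qed (simp add: Let_def)
  qed
  then show ?thesis
    using pbits_le[of "fixed_round_protocol R" r A B]
    by (simp add: prounds_fixed_round_protocol ptranscript_def nth_ptrans del: ptrans.simps)
qed

lemma lcp_less_block_width_fixed_round_q:
  "R \<ge> 1 \<Longrightarrow> lcp A B < block_width (fixed_round_q R (length A)) R 0"
  using lcp_le_length[of A B] less_pow_fixed_round_q[of R "length A"]
  by (simp add: block_width_def mult.commute)

lemma ptranscript_fixed_round_protocol: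
  fixes R :: nat and A B :: "'a::countable list"
  defines "q \<equiv> fixed_round_q R (length A)"
  assumes "R \<ge> 1" and correct: "probes_correct r A B (R * q + 3) {..<block_width q R 0}"
  shows "ptranscript (fixed_round_protocol R) r A B
    = map (fixed_round_transcript R q (prefix_fingerprint r A) (length A) (lcp A B)) [0..<2 + 2 * R]"
  unfolding ptranscript_def prounds_fixed_round_protocol
proof (rule ptrans_eq_map[OF _ order_refl])
  let ?T = "fixed_round_transcript R q (prefix_fingerprint r A) (length A) (lcp A B)"
  fix n assume "n < 2 + 2 * R"
  show "pmsg (fixed_round_protocol R) (map ?T [0..<n]) r (if even n then A else B) = ?T n"
  proof (cases "n < 2")
    case True
    then show ?thesis
      by (cases n) (simp_all add: q_def fixed_round_transcript_def)
  next
    case False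
    have "search_msg (if even n then prefix_fingerprint r A else prefix_fingerprint r B)
        (if even n then length A else length B) q R (R * q + 3) 2 (map ?T [0..<n])
      = ideal_search_msg (prefix_fingerprint r A) (length A) q R (R * q + 3) (lcp A B) 2 n"
    proof (rule search_msg_ideal[OF length_prefix_fingerprint])
      show "\<forall>p<block_width q R 0. probe_accepts (prefix_fingerprint r B) (length B) (R * q + 3) p
          (probe (prefix_fingerprint r A) (length A) (R * q + 3) p) \<longleftrightarrow> p \<le> lcp A B"
        using correct by (simp add: probes_correct_def)
      show "lcp A B < block_width q R 0"
        unfolding q_def using \<open>R \<ge> 1\<close> by (rule lcp_less_block_width_fixed_round_q)
      have "n - 2 < R * 2" using \<open>n < 2 + 2 * R\<close> \<open>R \<ge> 1\<close> by linarith
      then show "(n - 2) div 2 < R" by (simp add: div_less_iff_less_mult)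
    qed (use False in \<open>simp_all add: fixed_round_transcript_def\<close>)
    then show ?thesis
      using False by (cases "even n") (simp_all add: fixed_round_transcript_def)
  qed
qed

lemma poutput_fixed_round_protocol:
  fixes R :: nat and A B :: "'a::countable list"
  defines "q \<equiv> fixed_round_q R (length A)"
  assumes "R \<ge> 1" and "probes_correct r A B (R * q + 3) {..<block_width q R 0}"
  shows "poutput (fixed_round_protocol R) r A B = lcp A B"
proof -
  let ?T = "fixed_round_transcript R q (prefix_fingerprint r A) (length A) (lcp A B)"
  let ?t = "map ?T [0..<2 + 2 * R]"
  have "poutput (fixed_round_protocol R) r A B
      = from_digits q R (map (\<lambda>v. length (?t ! (2 + 2 * v + 1))) [0..<R])"
    unfolding poutput_def ptranscript_fixed_round_protocol[OF assms(2,3)[unfolded q_def], folded q_def]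
    by (simp add: fixed_round_transcript_def del: upt_Suc)
  also have "map (\<lambda>v. length (?t ! (2 + 2 * v + 1))) [0..<R] = map (digit q R (lcp A B)) [0..<R]"
    by (rule map_cong) (simp_all add: fixed_round_transcript_def ideal_search_msg_def del: upt_Suc)
  also have "from_digits q R \<dots> = lcp A B"
    unfolding q_def using \<open>R \<ge> 1\<close>
    by (intro from_digits_all_digits lcp_less_block_width_fixed_round_q)
  finally show ?thesis .
qed

lemma pbits_fixed_round_protocol_le_powr:
  fixes R :: nat and A B :: "'a::countable list"
  assumes "R \<ge> 1" "3 / R \<le> \<epsilon>"
  shows "real (pbits (fixed_round_protocol R) r A B)
    \<le> 8 * ((2 + 2 * R) * (R + 4)) * (1 + real (length A)) powr \<epsilon>"
proof -
  let ?q = "fixed_round_q R (length A)"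
  let ?k = "2 ^ ?q :: nat"
  obtain x where "?k \<le> 2 * x" "x ^ R \<le> 1 + length A"
    using fixed_round_q_root by blast
  then have k_cube: "real ?k ^ 3 \<le> 8 * real (1 + length A) powr \<epsilon>"
    using assms by (intro cube_le_powr[where c = 1]) simp_all
  have "pbits (fixed_round_protocol R) r A B \<le> (2 + 2 * R) * ((R + 4) * ?k ^ 2)"
    using pbits_fixed_round_protocol[where R=R and A=A and B=B and r=r] pow2_mult_linear_le[of ?q R]
    by (meson le_trans mult_le_mono2)
  also have "\<dots> \<le> (2 + 2 * R) * ((R + 4) * ?k ^ 3)"
    by (intro mult_le_mono2 power_increasing) simp_all
  also have "\<dots> = (2 + 2 * R) * (R + 4) * ?k ^ 3"
    by (simp only: mult.assoc)
  finally have "real (pbits (fixed_round_protocol R) r A B) \<le> real ((2 + 2 * R) * (R + 4)) * real ?k ^ 3"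
    by (metis of_nat_le_iff of_nat_mult of_nat_power)
  also have "\<dots> \<le> real ((2 + 2 * R) * (R + 4)) * (8 * real (1 + length A) powr \<epsilon>)"
    using k_cube by (intro mult_left_mono) simp_all
  also have "\<dots> = 8 * ((2 + 2 * R) * (R + 4)) * (1 + real (length A)) powr \<epsilon>"
    by (simp add: algebra_simps)
  finally show ?thesis .
qed

lemma fixed_round_lcp_protocol:
  fixes \<epsilon> :: real
  assumes "\<epsilon> > 0"
  shows "\<exists>(P :: ('a::countable) protocol) (C::real).
       \<forall>A B. (\<forall>r. phalts_within P r A B C
                 \<and> real (pbits P r A B) \<le> C * (1 + real (length A)) powr \<epsilon>)
           \<and> {r \<in> space coins. poutput P r A B = lcp A B} \<in> sets coins
           \<and> measure coins {r \<in> space coins. poutput P r A B = lcp A B} \<ge> 2/3"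
proof -
  obtain R :: nat where "R \<ge> 1" "3 / R \<le> \<epsilon>"
    using ex_nat_divide_le[OF assms] by blast
  define C :: real where "C = 8 * ((2 + 2 * R) * (R + 4)) + 2 + 2 * R"
  show ?thesis
  proof (intro exI[of _ "fixed_round_protocol R"] exI[of _ C] allI conjI)
    fix A B :: "'a list" and r
    have "phalt (fixed_round_protocol R) (ptrans (fixed_round_protocol R) r A B (2 + 2 * R)) r"
      by (simp del: ptrans.simps)
    then show "phalts_within (fixed_round_protocol R) r A B C"
      unfolding phalts_within_def C_def by (intro exI[of _ "2 + 2 * R"]) simp
    show "real (pbits (fixed_round_protocol R) r A B) \<le> C * (1 + real (length A)) powr \<epsilon>"
    proof (rule order_trans[OF pbits_fixed_round_protocol_le_powr[OF \<open>R \<ge> 1\<close> \<open>3 / R \<le> \<epsilon>\<close>]])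
      show "8 * ((2 + 2 * R) * (R + 4)) * (1 + real (length A)) powr \<epsilon> \<le> C * (1 + real (length A)) powr \<epsilon>"
        unfolding C_def by (intro mult_right_mono) simp_all
    qed
  next
    fix A B :: "'a list"
    let ?E = "{r \<in> space coins. poutput (fixed_round_protocol R) r A B = lcp A B}"
    show "?E \<in> sets coins"
      using measurable_sets[OF measurable_poutput[OF finitely_dependent_fixed_round_protocol], of "{lcp A B}"]
      by (simp add: vimage_def Int_def conj_commute)
    obtain U where U: "U \<in> sets coins" "measure coins U \<le> 1/8"
      and correct: "\<And>r. r \<notin> U \<Longrightarrow>
        probes_correct r A B (R * fixed_round_q R (length A) + 3) {..<block_width (fixed_round_q R (length A)) R 0}"
      using search_probes_correct_prob by blast
    have "1 - measure coins U \<le> measure coins ?E"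
      using U(1) \<open>?E \<in> sets coins\<close> poutput_fixed_round_protocol[OF \<open>R \<ge> 1\<close> correct]
      by (intro measure_coins_ge_compl) auto
    then show "measure coins ?E \<ge> 2/3" using U(2) by simp
  qed
qed

section \<open>Doubling search for the common prefix\<close>

definition double_exp :: "nat \<Rightarrow> nat" where
  "double_exp j = 2 ^ 2 ^ j"

definition doubling_stage :: "nat \<Rightarrow> nat" where
  "doubling_stage l = (LEAST j. l < double_exp j)"

lemma less_double_exp_doubling_stage: "l < double_exp (doubling_stage l)"
  unfolding doubling_stage_def
proof (rule LeastI)
  have "l < 2 ^ l" by (rule less_exp)
  also have "\<dots> \<le> 2 ^ 2 ^ l" using less_exp[of l] by (intro power_increasing) simp_all
  finally show "l < double_exp l" unfolding double_exp_def .
qed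

lemma double_exp_le_of_less_doubling_stage: "j < doubling_stage l \<Longrightarrow> double_exp j \<le> l"
  unfolding doubling_stage_def using not_less_Least by (metis not_le)

definition doubling_q :: "nat \<Rightarrow> nat \<Rightarrow> nat" where
  "doubling_q R j = 2 ^ j div R + 1"

lemma lcp_less_block_width_doubling_q:
  assumes "R \<ge> 1"
  shows "lcp A B < block_width (doubling_q R (doubling_stage (lcp A B))) R 0"
proof -
  let ?j = "doubling_stage (lcp A B)"
  have "2 ^ ?j < R * doubling_q R ?j"
    unfolding doubling_q_def using dividend_less_times_div[of R "2 ^ ?j"] assms by simp
  then have "double_exp ?j \<le> 2 ^ (R * doubling_q R ?j)"
    unfolding double_exp_def by (intro power_increasing) simp_all
  then show ?thesis
    using less_double_exp_doubling_stage[of "lcp A B"] by (simp add: block_width_def mult.commute)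
qed

definition doubling_end :: "bool list list \<Rightarrow> nat" where
  "doubling_end t = (LEAST i. length t \<le> 2 * i + 1 \<or> t ! (2 * i + 1) = [])"

text \<open>In its rounds \<open>2 j\<close> and \<open>2 j + 1\<close> the doubling phase probes position \<open>2^2^j\<close> with
  3-bit fingerprints, Bob answering \<open>[True]\<close> on acceptance.  It ends with the first rejection,
  at stage \<open>j\<^sub>s\<close>; then \<open>2^(R q) > 2^2^j\<^sub>s\<close> for \<open>q = 2^j\<^sub>s div R + 1\<close>, and the search of
  \<open>fixed_round_protocol\<close> follows.  Probes of positions \<open>2^2^j \<le> l\<close> compare equal prefixes, so
  only the one at stage \<open>doubling_stage l\<close> can be answered wrongly.\<close>
definition doubling_protocol :: "nat \<Rightarrow> 'a::countable protocol" where
  "doubling_protocol R =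
    \<lparr>pmsg = (\<lambda>t r X. let j = doubling_end t; q = doubling_q R j in
       if 2 * j + 1 < length t
       then search_msg (prefix_fingerprint r X) (length X) q R (R * q + 3) (2 * j + 2) t
       else if even (length t) then probe (prefix_fingerprint r X) (length X) 3 (double_exp (length t div 2))
       else if probe_accepts (prefix_fingerprint r X) (length X) 3 (double_exp (length t div 2)) (last t)
       then [True] else []),
     phalt = (\<lambda>t r. let j = doubling_end t in 2 * j + 1 < length t \<and> 2 * j + 2 + 2 * R \<le> length t),
     pout = (\<lambda>t r. let j = doubling_end t in
       from_digits (doubling_q R j) R (map (\<lambda>v. length (t ! (2 * j + 2 + 2 * v + 1))) [0..<R]))\<rparr>"

lemma doubling_protocol_simps [simp]:
  "pmsg (doubling_protocol R) t r X = (let j = doubling_end t; q = doubling_q R j in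
       if 2 * j + 1 < length t
       then search_msg (prefix_fingerprint r X) (length X) q R (R * q + 3) (2 * j + 2) t
       else if even (length t) then probe (prefix_fingerprint r X) (length X) 3 (double_exp (length t div 2))
       else if probe_accepts (prefix_fingerprint r X) (length X) 3 (double_exp (length t div 2)) (last t)
       then [True] else [])"
  "phalt (doubling_protocol R) t r \<longleftrightarrow>
     (let j = doubling_end t in 2 * j + 1 < length t \<and> 2 * j + 2 + 2 * R \<le> length t)"
  "pout (doubling_protocol R) t r = (let j = doubling_end t in
       from_digits (doubling_q R j) R (map (\<lambda>v. length (t ! (2 * j + 2 + 2 * v + 1))) [0..<R]))"
  by (simp_all add: doubling_protocol_def)

lemma finitely_dependent_doubling_protocol: "finitely_dependent_protocol (doubling_protocol R)"
  unfolding finitely_dependent_protocol_def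
proof (intro conjI allI)
  fix t :: "bool list list" and X :: "'a list"
  let ?j = "doubling_end t"
  let ?q = "doubling_q R ?j"
  let ?msg = "\<lambda>h. if 2 * ?j + 1 < length t then search_msg h (length X) ?q R (R * ?q + 3) (2 * ?j + 2) t
    else if even (length t) then probe h (length X) 3 (double_exp (length t div 2))
    else if probe_accepts h (length X) 3 (double_exp (length t div 2)) (last t) then [True] else []"
  have "finitely_dependent (\<lambda>r. ?msg (prefix_fingerprint r X))"
  proof (rule finitely_dependent_prefix_fingerprint)
    fix h h' :: "nat \<Rightarrow> nat \<Rightarrow> bool list"
    assume "h 3 = h' 3" "h (R * ?q + 3) = h' (R * ?q + 3)"
    then show "?msg h = ?msg h'"
      using search_msg_cong[of h "R * ?q + 3" h'] by (simp add: probe_def probe_accepts_def)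
  qed
  then show "finitely_dependent (\<lambda>r. pmsg (doubling_protocol R) t r X)" by (simp add: Let_def)
qed (unfold doubling_protocol_def, simp_all add: finitely_dependent_const)

definition doubling_transcript ::
    "nat \<Rightarrow> nat \<Rightarrow> (nat \<Rightarrow> nat \<Rightarrow> bool list) \<Rightarrow> nat \<Rightarrow> nat \<Rightarrow> nat \<Rightarrow> nat \<Rightarrow> bool list" where
  "doubling_transcript R q h n l j m =
     (if m < 2 * j + 2 then
        (if even m then probe h n 3 (double_exp (m div 2)) else if m div 2 < j then [True] else [])
      else ideal_search_msg h n q R (R * q + 3) l (2 * j + 2) m)"

lemma doubling_end_doubling_transcript_less:
  assumes "m \<le> 2 * j + 1"
  shows "doubling_end (map (doubling_transcript R q h n l j) [0..<m]) = m div 2"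
  unfolding doubling_end_def
proof (rule Least_equality)
  have "m \<le> 2 * (m div 2) + 1" by presburger
  then show "length (map (doubling_transcript R q h n l j) [0..<m]) \<le> 2 * (m div 2) + 1
      \<or> map (doubling_transcript R q h n l j) [0..<m] ! (2 * (m div 2) + 1) = []" by simp
next
  fix i
  assume "length (map (doubling_transcript R q h n l j) [0..<m]) \<le> 2 * i + 1
      \<or> map (doubling_transcript R q h n l j) [0..<m] ! (2 * i + 1) = []"
  moreover have "map (doubling_transcript R q h n l j) [0..<m] ! (2 * i + 1) = [True]"
    if "2 * i + 1 < m" using that assms by (simp add: doubling_transcript_def del: upt_Suc)
  ultimately show "m div 2 \<le> i" by fastforce
qed

lemma doubling_end_doubling_transcript:
  assumes "2 * j + 2 \<le> m"
  shows "doubling_end (map (doubling_transcript R q h n l j) [0..<m]) = j"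
  unfolding doubling_end_def
proof (rule Least_equality)
  show "length (map (doubling_transcript R q h n l j) [0..<m]) \<le> 2 * j + 1
      \<or> map (doubling_transcript R q h n l j) [0..<m] ! (2 * j + 1) = []"
    using assms by (simp add: doubling_transcript_def del: upt_Suc)
next
  fix i
  assume "length (map (doubling_transcript R q h n l j) [0..<m]) \<le> 2 * i + 1
      \<or> map (doubling_transcript R q h n l j) [0..<m] ! (2 * i + 1) = []"
  moreover have "map (doubling_transcript R q h n l j) [0..<m] ! (2 * i + 1) = [True]"
    if "i < j" using that assms by (simp add: doubling_transcript_def del: upt_Suc)
  ultimately show "j \<le> i" using assms by fastforce
qed

lemma probe_accepts_double_exp_iff:
  fixes A B :: "'a::countable list"
  assumes "probes_correct r A B 3 {double_exp (doubling_stage (lcp A B))}" "i \<le> doubling_stage (lcp A B)"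
  shows "probe_accepts (prefix_fingerprint r B) (length B) 3 (double_exp i)
      (probe (prefix_fingerprint r A) (length A) 3 (double_exp i)) \<longleftrightarrow> i < doubling_stage (lcp A B)"
proof (cases "i < doubling_stage (lcp A B)")
  case True
  then have "double_exp i \<le> lcp A B" by (rule double_exp_le_of_less_doubling_stage)
  then show ?thesis
    using True by (simp add: probe_accepts_probe_iff le_lcp_iff)
next
  case False
  then show ?thesis
    using assms less_double_exp_doubling_stage[of "lcp A B"] by (simp add: probes_correct_def)
qed

lemma pmsg_doubling_protocol_doubling_phase:
  fixes R q :: nat and r :: "nat \<Rightarrow> bool" and A B :: "'a::countable list"
  defines "j \<equiv> doubling_stage (lcp A B)"
  defines "T \<equiv> doubling_transcript R q (prefix_fingerprint r A) (length A) (lcp A B) j"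
  assumes correct: "probes_correct r A B 3 {double_exp j}" and "m < 2 * j + 2"
  shows "pmsg (doubling_protocol R) (map T [0..<m]) r (if even m then A else B) = T m"
proof -
  have doubling_end: "doubling_end (map T [0..<m]) = m div 2"
    unfolding T_def using \<open>m < 2 * j + 2\<close> by (intro doubling_end_doubling_transcript_less) simp
  have not_searching: "\<not> 2 * (m div 2) + 1 < m" by presburger
  show ?thesis
  proof (cases "even m")
    case True
    then show ?thesis
      using doubling_end not_searching \<open>m < 2 * j + 2\<close> by (simp add: T_def doubling_transcript_def)
  next
    case False
    then have "m - 1 < 2 * j + 2" "even (m - 1)" "(m - 1) div 2 = m div 2" "0 < m"
      using \<open>m < 2 * j + 2\<close> by (auto elim: oddE)
    then have last_probe:
      "last (map T [0..<m]) = probe (prefix_fingerprint r A) (length A) 3 (double_exp (m div 2))"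
      by (simp add: last_map T_def doubling_transcript_def)
    have "probe_accepts (prefix_fingerprint r B) (length B) 3 (double_exp (m div 2))
        (probe (prefix_fingerprint r A) (length A) 3 (double_exp (m div 2))) \<longleftrightarrow> m div 2 < j"
      using correct \<open>m < 2 * j + 2\<close> unfolding j_def by (intro probe_accepts_double_exp_iff) simp_all
    then show ?thesis
      using doubling_end not_searching False last_probe \<open>m < 2 * j + 2\<close>
      by (simp add: T_def doubling_transcript_def)
  qed
qed

lemma pmsg_doubling_protocol_search_phase:
  fixes R :: nat and r :: "nat \<Rightarrow> bool" and A B :: "'a::countable list"
  defines "j \<equiv> doubling_stage (lcp A B)"
  defines "q \<equiv> doubling_q R j"
  defines "T \<equiv> doubling_transcript R q (prefix_fingerprint r A) (length A) (lcp A B) j"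
  assumes "R \<ge> 1" and correct: "probes_correct r A B (R * q + 3) {..<block_width q R 0}"
    and "2 * j + 2 \<le> m" "m < 2 * j + 2 + 2 * R"
  shows "pmsg (doubling_protocol R) (map T [0..<m]) r (if even m then A else B) = T m"
proof -
  have "doubling_end (map T [0..<m]) = j"
    unfolding T_def using \<open>2 * j + 2 \<le> m\<close> by (rule doubling_end_doubling_transcript)
  then have "pmsg (doubling_protocol R) (map T [0..<m]) r (if even m then A else B)
      = search_msg (if even m then prefix_fingerprint r A else prefix_fingerprint r B)
          (if even m then length A else length B) q R (R * q + 3) (2 * j + 2) (map T [0..<m])"
    using \<open>2 * j + 2 \<le> m\<close> by (simp add: Let_def q_def)
  also have "search_msg (if even m then prefix_fingerprint r A else prefix_fingerprint r B)
      (if even m then length A else length B) q R (R * q + 3) (2 * j + 2) (map T [0..<m])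
    = ideal_search_msg (prefix_fingerprint r A) (length A) q R (R * q + 3) (lcp A B) (2 * j + 2) m"
  proof (rule search_msg_ideal[OF length_prefix_fingerprint])
    show "\<forall>p<block_width q R 0. probe_accepts (prefix_fingerprint r B) (length B) (R * q + 3) p
        (probe (prefix_fingerprint r A) (length A) (R * q + 3) p) \<longleftrightarrow> p \<le> lcp A B"
      using correct by (simp add: probes_correct_def)
    show "lcp A B < block_width q R 0"
      unfolding q_def j_def using \<open>R \<ge> 1\<close> by (rule lcp_less_block_width_doubling_q)
    have "m - (2 * j + 2) < R * 2" using \<open>2 * j + 2 \<le> m\<close> \<open>m < 2 * j + 2 + 2 * R\<close> by linarith
    then show "(m - (2 * j + 2)) div 2 < R" by (simp add: div_less_iff_less_mult)
  qed (use \<open>2 * j + 2 \<le> m\<close> in \<open>simp_all add: T_def doubling_transcript_def\<close>)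
  also have "\<dots> = T m"
    using \<open>2 * j + 2 \<le> m\<close> by (simp add: T_def doubling_transcript_def)
  finally show ?thesis .
qed

lemma length_doubling_transcript:
  assumes "\<And>b p. length (h b p) = b"
  shows "length (doubling_transcript R q h n l j m) \<le> 2 ^ q * (R * q + 4)"
proof (cases "m < 2 * j + 2")
  case True
  then have "length (doubling_transcript R q h n l j m) \<le> 1 * (R * q + 4)"
    by (simp add: doubling_transcript_def length_probe[OF assms])
  also have "\<dots> \<le> 2 ^ q * (R * q + 4)"
    by (intro mult_le_mono1) simp
  finally show ?thesis .
next
  case False
  then show ?thesis
    using length_ideal_search_msg[OF assms, where nA=n and q=q and R=R and b="R * q + 3" and l=l
        and off="2 * j + 2" and m=m]
    by (simp add: doubling_transcript_def add.commute)
qed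

context
  fixes R :: nat and r :: "nat \<Rightarrow> bool" and A B :: "'a::countable list"
    and j q :: nat and T :: "nat \<Rightarrow> bool list"
  defines "j \<equiv> doubling_stage (lcp A B)"
    and "q \<equiv> doubling_q R j"
    and "T \<equiv> doubling_transcript R q (prefix_fingerprint r A) (length A) (lcp A B) j"
  assumes R: "R \<ge> 1"
    and stage_correct: "probes_correct r A B 3 {double_exp j}"
    and search_correct: "probes_correct r A B (R * q + 3) {..<block_width q R 0}"
begin

lemma ptrans_doubling_protocol:
  "i \<le> 2 * j + 2 + 2 * R \<Longrightarrow> ptrans (doubling_protocol R) r A B i = map T [0..<i]"
proof (rule ptrans_eq_map)
  fix m assume "m < 2 * j + 2 + 2 * R"
  show "pmsg (doubling_protocol R) (map T [0..<m]) r (if even m then A else B) = T m"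
  proof (cases "m < 2 * j + 2")
    case True
    then show ?thesis
      using pmsg_doubling_protocol_doubling_phase[OF stage_correct[unfolded j_def]]
      unfolding T_def j_def by blast
  next
    case False
    then show ?thesis
      using pmsg_doubling_protocol_search_phase[OF R search_correct[unfolded q_def j_def]]
        \<open>m < 2 * j + 2 + 2 * R\<close>
      unfolding T_def q_def j_def by simp
  qed
qed

lemma doubling_end_map_doubling_transcript:
  "2 * j + 2 \<le> m \<Longrightarrow> doubling_end (map T [0..<m]) = j"
  unfolding T_def by (rule doubling_end_doubling_transcript)

lemma phalt_doubling_protocol:
  "phalt (doubling_protocol R) (ptrans (doubling_protocol R) r A B (2 * j + 2 + 2 * R)) r"
  using doubling_end_map_doubling_transcript[of "2 * j + 2 + 2 * R"]
  by (simp add: ptrans_doubling_protocol Let_def del: ptrans.simps upt_Suc)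

lemma prounds_doubling_protocol: "prounds (doubling_protocol R) r A B = 2 * j + 2 + 2 * R"
proof (rule prounds_eqI[OF phalt_doubling_protocol])
  fix i assume "i < 2 * j + 2 + 2 * R"
  have "\<not> phalt (doubling_protocol R) (map T [0..<i]) r"
  proof (cases "i \<le> 2 * j + 1")
    case True
    have "\<not> 2 * (i div 2) + 1 < i" by presburger
    then show ?thesis
      using doubling_end_doubling_transcript_less[OF True] by (simp add: T_def Let_def)
  next
    case False
    then show ?thesis
      using doubling_end_map_doubling_transcript[of i] \<open>i < 2 * j + 2 + 2 * R\<close> by (simp add: Let_def)
  qed
  then show "\<not> phalt (doubling_protocol R) (ptrans (doubling_protocol R) r A B i) r"
    using \<open>i < 2 * j + 2 + 2 * R\<close> by (simp add: ptrans_doubling_protocol del: ptrans.simps)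
qed

lemma ptranscript_doubling_protocol:
  "ptranscript (doubling_protocol R) r A B = map T [0..<2 * j + 2 + 2 * R]"
  unfolding ptranscript_def prounds_doubling_protocol by (rule ptrans_doubling_protocol) simp

lemma phalts_within_doubling_protocol: "phalts_within (doubling_protocol R) r A B (2 * j + 2 + 2 * R)"
  unfolding phalts_within_def using phalt_doubling_protocol by (metis order_refl)

lemma pbits_doubling_protocol:
  "pbits (doubling_protocol R) r A B \<le> (2 * j + 2 + 2 * R) * (2 ^ q * (R * q + 4))"
proof -
  have "length (ptranscript (doubling_protocol R) r A B ! i) \<le> 2 ^ q * (R * q + 4)"
    if "i < prounds (doubling_protocol R) r A B" for i
    using that length_doubling_transcript[where h="prefix_fingerprint r A", OF length_prefix_fingerprint,
        where R=R and q=q and n="length A" and l="lcp A B" and j=j and m=i]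
    by (simp add: ptranscript_doubling_protocol prounds_doubling_protocol T_def del: upt_Suc)
  then show ?thesis
    using pbits_le[of "doubling_protocol R" r A B] by (simp add: prounds_doubling_protocol)
qed

lemma poutput_doubling_protocol: "poutput (doubling_protocol R) r A B = lcp A B"
proof -
  let ?t = "map T [0..<2 * j + 2 + 2 * R]"
  have "poutput (doubling_protocol R) r A B
      = from_digits q R (map (\<lambda>v. length (?t ! (2 * j + 2 + 2 * v + 1))) [0..<R])"
    unfolding poutput_def ptranscript_doubling_protocol
    using doubling_end_map_doubling_transcript[of "2 * j + 2 + 2 * R"]
    by (simp add: q_def Let_def del: upt_Suc)
  also have "map (\<lambda>v. length (?t ! (2 * j + 2 + 2 * v + 1))) [0..<R] = map (digit q R (lcp A B)) [0..<R]"
    by (rule map_cong) (simp_all add: T_def doubling_transcript_def ideal_search_msg_def del: upt_Suc)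
  also have "from_digits q R \<dots> = lcp A B"
    unfolding q_def j_def using R by (intro from_digits_all_digits lcp_less_block_width_doubling_q)
  finally show ?thesis .
qed

end

lemma one_le_loglog: "1 \<le> log 2 (log 2 (real l + 4))"
proof -
  have "2 \<le> log 2 (real l + 4)" by (subst le_log_iff) simp_all
  then show ?thesis by (subst le_log_iff) simp_all
qed

lemma doubling_stage_le_loglog: "real (doubling_stage l) \<le> 1 + log 2 (log 2 (real l + 4))"
proof (cases "doubling_stage l")
  case 0
  then show ?thesis using one_le_loglog[of l] by simp
next
  case (Suc i)
  then have "double_exp i \<le> l" by (intro double_exp_le_of_less_doubling_stage) simp
  have "(2::real) powr real (2 ^ i) = real (double_exp i)"
    unfolding double_exp_def by (subst powr_realpow) simp_all
  also have "\<dots> < real l + 4" using \<open>double_exp i \<le> l\<close> by simp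
  finally have "(2::real) powr real (2 ^ i) < real l + 4" .
  then have "real (2 ^ i) < log 2 (real l + 4)" by (subst less_log_iff) simp_all
  then have "(2::real) powr real i < log 2 (real l + 4)" by (simp add: powr_realpow)
  then have "real i < log 2 (log 2 (real l + 4))"
    using one_le_loglog[of l] by (subst less_log_iff) auto
  then show ?thesis using Suc by simp
qed

lemma doubling_stage_less:
  assumes "R \<ge> 1"
  shows "doubling_stage l < R * 2 ^ doubling_q R (doubling_stage l)"
proof -
  let ?j = "doubling_stage l"
  have "?j < 2 ^ ?j" by (rule less_exp)
  also have "\<dots> < R * doubling_q R ?j"
    unfolding doubling_q_def using dividend_less_times_div[of R "2 ^ ?j"] assms by simp
  also have "\<dots> \<le> R * 2 ^ doubling_q R ?j"
    using less_exp[of "doubling_q R ?j"] by (intro mult_le_mono2) simp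
  finally show ?thesis .
qed

lemma doubling_q_root:
  assumes "R \<ge> 2"
  shows "\<exists>x. 2 ^ doubling_q R (doubling_stage l) \<le> 2 * x \<and> x ^ R \<le> (1 + l) ^ 2"
proof (intro exI conjI)
  let ?j = "doubling_stage l"
  show "2 ^ doubling_q R ?j \<le> 2 * (2 :: nat) ^ (2 ^ ?j div R)" by (simp add: doubling_q_def)
  show "(2 ^ (2 ^ ?j div R) :: nat) ^ R \<le> (1 + l) ^ 2"
  proof (cases ?j)
    case 0
    then show ?thesis using assms by simp
  next
    case (Suc i)
    then have "double_exp i \<le> l" by (intro double_exp_le_of_less_doubling_stage) simp
    have "(2 ^ (2 ^ ?j div R) :: nat) ^ R = 2 ^ (2 ^ ?j div R * R)" by (simp add: power_mult)
    also have "\<dots> \<le> 2 ^ 2 ^ ?j" by (intro power_increasing) simp_all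
    also have "\<dots> = double_exp i ^ 2" unfolding double_exp_def Suc by (simp add: power_mult[symmetric] mult.commute)
    also have "\<dots> \<le> (1 + l) ^ 2" using \<open>double_exp i \<le> l\<close> by (intro power_mono) simp_all
    finally show ?thesis .
  qed
qed

lemma doubling_rounds_le_loglog:
  "real (2 * doubling_stage l + 2 + 2 * R) \<le> (6 + 2 * R) * log 2 (log 2 (real l + 4))"
proof -
  let ?L = "log 2 (log 2 (real l + 4))"
  have "4 + 2 * real R \<le> (4 + 2 * real R) * ?L"
    using mult_left_mono[OF one_le_loglog[of l], of "4 + 2 * real R"] by simp
  then show ?thesis
    using doubling_stage_le_loglog[of l] by (simp add: algebra_simps)
qed

lemma pbits_doubling_protocol_le_powr:
  fixes R :: nat and A B :: "'a::countable list"
  defines "j \<equiv> doubling_stage (lcp A B)"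
  defines "q \<equiv> doubling_q R j"
  assumes "R \<ge> 2" "6 / R \<le> \<epsilon>"
    and "probes_correct r A B 3 {double_exp j}"
    and "probes_correct r A B (R * q + 3) {..<block_width q R 0}"
  shows "real (pbits (doubling_protocol R) r A B)
    \<le> 8 * ((4 * R + 2) * (R + 4)) * (1 + real (lcp A B)) powr \<epsilon>"
proof -
  let ?k = "2 ^ q :: nat"
  obtain x where "?k \<le> 2 * x" "x ^ R \<le> (1 + lcp A B) ^ 2"
    using doubling_q_root[OF \<open>R \<ge> 2\<close>] unfolding q_def j_def by blast
  then have k_cube: "real ?k ^ 3 \<le> 8 * real (1 + lcp A B) powr \<epsilon>"
    using assms(3,4) by (intro cube_le_powr[where c = 2]) simp_all
  have "2 * j \<le> 2 * R * ?k"
    using doubling_stage_less[of R "lcp A B"] \<open>R \<ge> 2\<close> unfolding j_def q_def by simp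
  moreover have "2 + 2 * R \<le> (2 + 2 * R) * ?k"
    using mult_le_mono2[of 1 ?k "2 + 2 * R"] by simp
  moreover have "(4 * R + 2) * ?k = 2 * R * ?k + (2 + 2 * R) * ?k" by (simp add: algebra_simps)
  ultimately have "2 * j + 2 + 2 * R \<le> (4 * R + 2) * ?k" by linarith
  moreover have "pbits (doubling_protocol R) r A B \<le> (2 * j + 2 + 2 * R) * (?k * (R * q + 4))"
    using pbits_doubling_protocol[of R r A B, folded j_def q_def] assms(3,5,6) by simp
  ultimately have "pbits (doubling_protocol R) r A B \<le> (4 * R + 2) * ?k * ((R + 4) * ?k ^ 2)"
    using pow2_mult_linear_le[of q R] by (meson le_trans mult_le_mono)
  also have "\<dots> = (4 * R + 2) * (R + 4) * ?k ^ 3"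
    by (simp only: power2_eq_square power3_eq_cube mult_ac)
  finally have "real (pbits (doubling_protocol R) r A B) \<le> real ((4 * R + 2) * (R + 4)) * real ?k ^ 3"
    by (metis of_nat_le_iff of_nat_mult of_nat_power)
  also have "\<dots> \<le> real ((4 * R + 2) * (R + 4)) * (8 * real (1 + lcp A B) powr \<epsilon>)"
    using k_cube by (intro mult_left_mono) simp_all
  also have "\<dots> = 8 * ((4 * R + 2) * (R + 4)) * (1 + real (lcp A B)) powr \<epsilon>"
    by (simp add: algebra_simps)
  finally show ?thesis .
qed

lemma doubling_lcp_protocol:
  fixes \<epsilon> :: real
  assumes "\<epsilon> > 0"
  shows "\<exists>(P :: ('a::countable) protocol) (C::real).
       \<forall>A B. (let E = {r \<in> space coins.
                    phalts_within P r A B (C * log 2 (log 2 (real (lcp A B) + 4)))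
                  \<and> real (pbits P r A B) \<le> C * (1 + real (lcp A B)) powr \<epsilon>
                  \<and> poutput P r A B = lcp A B}
              in E \<in> sets coins \<and> measure coins E \<ge> 2/3)"
proof -
  obtain R :: nat where "R \<ge> 2" "R \<ge> 1" "6 / R \<le> \<epsilon>"
    using ex_nat_divide_le[OF assms] by blast
  define C :: real where "C = 8 * ((4 * R + 2) * (R + 4)) + 6 + 2 * R"
  show ?thesis
  proof (intro exI[of _ "doubling_protocol R"] exI[of _ C] allI, unfold Let_def, intro conjI)
    fix A B :: "'a list"
    let ?L = "log 2 (log 2 (real (lcp A B) + 4))"
    let ?Y = "(1 + real (lcp A B)) powr \<epsilon>"
    let ?E = "{r \<in> space coins. phalts_within (doubling_protocol R) r A B (C * ?L)
      \<and> real (pbits (doubling_protocol R) r A B) \<le> C * ?Y \<and> poutput (doubling_protocol R) r A B = lcp A B}"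
    let ?j = "doubling_stage (lcp A B)"
    let ?q = "doubling_q R ?j"
    show "?E \<in> sets coins"
      by (rule sets_protocol_run[OF finitely_dependent_doubling_protocol])
    have "(6 + 2 * real R) * ?L \<le> C * ?L"
      unfolding C_def using one_le_loglog[of "lcp A B"] by (intro mult_right_mono) simp_all
    then have rounds: "real (2 * ?j + 2 + 2 * R) \<le> C * ?L"
      by (rule order_trans[OF doubling_rounds_le_loglog])
    have bits: "8 * ((4 * R + 2) * (R + 4)) * ?Y \<le> C * ?Y"
      unfolding C_def by (intro mult_right_mono) simp_all
    obtain U1 where U1: "U1 \<in> sets coins" "measure coins U1 \<le> 1/8"
      and stage_correct: "\<And>r. r \<notin> U1 \<Longrightarrow> probes_correct r A B 3 {double_exp ?j}"
      using probes_correct_prob[where Ps="{double_exp ?j}" and b=3 and A=A and B=B]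
      by (auto simp: power3_eq_cube)
    obtain U2 where U2: "U2 \<in> sets coins" "measure coins U2 \<le> 1/8"
      and search_correct: "\<And>r. r \<notin> U2 \<Longrightarrow> probes_correct r A B (R * ?q + 3) {..<block_width ?q R 0}"
      using search_probes_correct_prob by blast
    have "r \<in> ?E" if "r \<notin> U1 \<union> U2" for r
    proof -
      have correct: "probes_correct r A B 3 {double_exp ?j}"
        "probes_correct r A B (R * ?q + 3) {..<block_width ?q R 0}"
        using that stage_correct search_correct by auto
      have "phalts_within (doubling_protocol R) r A B (C * ?L)"
        using phalts_within_doubling_protocol[OF \<open>R \<ge> 1\<close> correct] rounds by (rule phalts_within_mono)
      moreover have "real (pbits (doubling_protocol R) r A B) \<le> C * ?Y"
        using pbits_doubling_protocol_le_powr[OF \<open>R \<ge> 2\<close> \<open>6 / R \<le> \<epsilon>\<close> correct] bits by (rule order_trans)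
      ultimately show ?thesis
        using poutput_doubling_protocol[OF \<open>R \<ge> 1\<close> correct] by simp
    qed
    then have "1 - measure coins (U1 \<union> U2) \<le> measure coins ?E"
      using U1(1) U2(1) \<open>?E \<in> sets coins\<close> by (intro measure_coins_ge_compl) auto
    moreover have "measure coins (U1 \<union> U2) \<le> 1/4"
      using measure_Un_le[OF U1(1) U2(1)] U1(2) U2(2) by simp
    ultimately show "measure coins ?E \<ge> 2/3" by simp
  qed
qed

theorem lemma13:
  fixes \<epsilon> :: real
  assumes "\<epsilon> > 0"
  shows
   "(\<exists>(P :: ('a::countable) protocol) (C::real).
       \<forall>A B. (\<forall>r. phalts_within P r A B C
                 \<and> real (pbits P r A B) \<le> C * (1 + real (length A)) powr \<epsilon>)
           \<and> {r \<in> space coins. poutput P r A B = lcp A B} \<in> sets coins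
           \<and> measure coins {r \<in> space coins. poutput P r A B = lcp A B} \<ge> 2/3)
    \<and>
    (\<exists>(P :: 'a protocol) (C::real).
       \<forall>A B. (let E = {r \<in> space coins.
                    phalts_within P r A B (C * log 2 (log 2 (real (lcp A B) + 4)))
                  \<and> real (pbits P r A B) \<le> C * (1 + real (lcp A B)) powr \<epsilon>
                  \<and> poutput P r A B = lcp A B}
              in E \<in> sets coins \<and> measure coins E \<ge> 2/3))"
  using fixed_round_lcp_protocol[OF assms] doubling_lcp_protocol[OF assms] by blast

end
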